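(* Let $X$ be a real Banach space such that $X^*$ and $X^{**}$ are strictly convex, $X$ has the w-Kadec-Klee property and $X^*$ has the $w^*$-Kadec-Klee property. Let $v\in X\setminus\{0\}$, let $(t_i)_{i\in I}$ be a net of positive reals with $t_i\to0$, and let $(w_i)_{i\in I}\subset X$. If there is a net $(z_i^* )_{i\in I}\subset X^*$ with $z_i^*\in J_{t_i}(w_i)$ for all $i$ and $\|z_i^*-J(v)\|\to0$, then some subnet of $(w_i)_{i\in I}$ converges in norm to $v$.
   Context: For $\varepsilon\ge0$, $J_\varepsilon(w):=\{w^*\in X^*: \tfrac12\|y\|^2+\varepsilon\ge \tfrac12\|w\|^2+\langle w^*,y-w\rangle\ \forall y\in X\}$, and $J=J_0$ is the duality mapping, single-valued since $X^*$ is strictly convex. $X$ has the w-Kadec-Klee property if every net with $x_i\to x$ weakly and $\|x_i\|\to\|x\|$ converges in norm; $X^*$ has the $w^*$-Kadec-Klee property if every net with $x_i^*\to x^*$ weak$^*$ and $\|x_i^*\|\to\|x^*\|$ converges in norm. *)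

theory Defs
  imports "HOL-Analysis.Analysis"
begin

definition strictly_convex_space :: "'b::real_normed_vector itself \<Rightarrow> bool" where
  "strictly_convex_space _ \<longleftrightarrow>
     (\<forall>x y :: 'b. norm x = 1 \<and> norm y = 1 \<and> x \<noteq> y \<longrightarrow> norm ((1/2) *\<^sub>R (x + y)) < 1)"

text \<open>w-Kadec-Klee property, stated for nets; a net is represented by its
  (tail) filter of values in X.\<close>
definition w_Kadec_Klee :: "'a::real_normed_vector itself \<Rightarrow> bool" where
  "w_Kadec_Klee _ \<longleftrightarrow>
     (\<forall>(F :: 'a filter) (x :: 'a).
        (\<forall>f :: 'a \<Rightarrow>\<^sub>L real. ((\<lambda>y. blinfun_apply f y) \<longlongrightarrow> blinfun_apply f x) F)
        \<and> ((\<lambda>y. norm y) \<longlongrightarrow> norm x) F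
        \<longrightarrow> ((\<lambda>y. y) \<longlongrightarrow> x) F)"

definition wstar_Kadec_Klee :: "'a::real_normed_vector itself \<Rightarrow> bool" where
  "wstar_Kadec_Klee _ \<longleftrightarrow>
     (\<forall>(F :: ('a \<Rightarrow>\<^sub>L real) filter) (xs :: 'a \<Rightarrow>\<^sub>L real).
        (\<forall>y :: 'a. ((\<lambda>g. blinfun_apply g y) \<longlongrightarrow> blinfun_apply xs y) F)
        \<and> ((\<lambda>g. norm g) \<longlongrightarrow> norm xs) F
        \<longrightarrow> ((\<lambda>g. g) \<longlongrightarrow> xs) F)"

definition J_eps :: "real \<Rightarrow> 'a::real_normed_vector \<Rightarrow> ('a \<Rightarrow>\<^sub>L real) set" where
  "J_eps \<epsilon> w = {ws. \<forall>y. (1/2) * (norm y)\<^sup>2 + \<epsilon> \<ge> (1/2) * (norm w)\<^sup>2 + blinfun_apply ws (y - w)}"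

definition duality_map :: "'a::real_normed_vector \<Rightarrow> ('a \<Rightarrow>\<^sub>L real)" where
  "duality_map w = (THE ws. ws \<in> J_eps 0 w)"

definition directed :: "'i set \<Rightarrow> ('i \<Rightarrow> 'i \<Rightarrow> bool) \<Rightarrow> bool" where
  "directed I le \<longleftrightarrow> I \<noteq> {} \<and> (\<forall>i\<in>I. le i i)
     \<and> (\<forall>i\<in>I. \<forall>j\<in>I. \<forall>k\<in>I. le i j \<and> le j k \<longrightarrow> le i k)
     \<and> (\<forall>i\<in>I. \<forall>j\<in>I. \<exists>k\<in>I. le i k \<and> le j k)"

definition net_lim :: "'i set \<Rightarrow> ('i \<Rightarrow> 'i \<Rightarrow> bool) \<Rightarrow> ('i \<Rightarrow> 'b::topological_space) \<Rightarrow> 'b \<Rightarrow> bool" where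
  "net_lim I le x l \<longleftrightarrow>
     (\<forall>U. open U \<and> l \<in> U \<longrightarrow> (\<exists>i0\<in>I. \<forall>i\<in>I. le i0 i \<longrightarrow> x i \<in> U))"

text \<open>Subnet in the sense of Willard: \<phi> : K \<rightarrow> I with K directed and \<phi> cofinal.\<close>
definition subnet_map :: "'k set \<Rightarrow> ('k \<Rightarrow> 'k \<Rightarrow> bool) \<Rightarrow> ('k \<Rightarrow> 'i) \<Rightarrow> 'i set \<Rightarrow> ('i \<Rightarrow> 'i \<Rightarrow> bool) \<Rightarrow> bool" where
  "subnet_map K leK \<phi> I le \<longleftrightarrow> directed K leK \<and> \<phi> ` K \<subseteq> I
     \<and> (\<forall>i0\<in>I. \<exists>k0\<in>K. \<forall>k\<in>K. leK k0 k \<longrightarrow> le i0 (\<phi> k))"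

end

theory Submission
  imports Defs
begin

text \<open>From z i \<in> J_eps (t i) (w i) and z i \<rightarrow> J v one reads off norm (w i) \<rightarrow> norm v and
  J v (w i) \<rightarrow> (norm v)^2. If w did not converge weakly to v, Hahn-Banach applied to a limit
  superior along a suitable subfilter would produce a functional in the bidual, different from
  the canonical image of v, that norms J v as well; strict convexity of the bidual forbids this.
  So w converges weakly to v, the w-Kadec-Klee property makes the convergence strong, and the
  net itself is the required subnet.\<close>

definition sublinear :: "('a::real_vector \<Rightarrow> real) \<Rightarrow> bool" where
  "sublinear q \<longleftrightarrow> (\<forall>x y. q (x + y) \<le> q x + q y) \<and> (\<forall>c x. 0 \<le> c \<longrightarrow> q (c *\<^sub>R x) = c * q x)"

lemma sublinearI:
  assumes add: "\<And>x y. q (x + y) \<le> q x + q y"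
    and scale: "\<And>c x. 0 < c \<Longrightarrow> q (c *\<^sub>R x) \<le> c * q x"
  shows "sublinear q"
proof -
  have pos: "q (c *\<^sub>R x) = c * q x" if c: "0 < c" for c x
  proof (rule antisym)
    have "q x = q ((1 / c) *\<^sub>R (c *\<^sub>R x))" using c by simp
    also have "\<dots> \<le> (1 / c) * q (c *\<^sub>R x)" using scale[of "1 / c" "c *\<^sub>R x"] c by simp
    finally show "c * q x \<le> q (c *\<^sub>R x)" using c by (simp add: field_simps)
  qed (rule scale[OF c])
  have "q 0 \<le> 2 * q 0" "q 0 \<le> (1 / 2) * q 0"
    using scale[of 2 0] scale[of "1 / 2" 0] by auto
  then have "q 0 = 0" by linarith
  then show ?thesis
    unfolding sublinear_def using add pos by (metis less_eq_real_def mult_zero_left scaleR_zero_left)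
qed

lemma sublinear_add: "sublinear q \<Longrightarrow> q (x + y) \<le> q x + q y"
  unfolding sublinear_def by blast

lemma sublinear_scale: "sublinear q \<Longrightarrow> 0 \<le> c \<Longrightarrow> q (c *\<^sub>R x) = c * q x"
  unfolding sublinear_def by blast

lemma sublinear_zero: "sublinear q \<Longrightarrow> q 0 = 0"
  using sublinear_scale[of q 0 0] by simp

lemma sublinear_add_neg_nonneg: "sublinear q \<Longrightarrow> 0 \<le> q x + q (- x)"
  using sublinear_add[of q x "- x"] sublinear_zero[of q] by simp

lemma sublinear_norm: "sublinear (norm :: 'a::real_normed_vector \<Rightarrow> real)"
  by (rule sublinearI) (auto simp: norm_triangle_ineq)

lemma sublinear_lower_at_neg:
  assumes m: "sublinear m"
  shows "\<exists>r. sublinear r \<and> r \<le> m \<and> r (- y) \<le> - m y"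
proof -
  define r where "r x = (INF t\<in>{0::real..}. m (x + t *\<^sub>R y) - t * m y)" for x
  have bdd: "bdd_below ((\<lambda>t. m (x + t *\<^sub>R y) - t * m y) ` {0..})" for x
  proof (rule bdd_belowI2[where m="- m (- x)"])
    fix t :: real assume "t \<in> {0..}"
    then have "t * m y = m (t *\<^sub>R y)" using sublinear_scale[OF m] by simp
    also have "\<dots> \<le> m (x + t *\<^sub>R y) + m (- x)" using sublinear_add[OF m, of "x + t *\<^sub>R y" "- x"] by simp
    finally show "- m (- x) \<le> m (x + t *\<^sub>R y) - t * m y" by simp
  qed
  have r_le: "r x \<le> m (x + t *\<^sub>R y) - t * m y" if "0 \<le> t" for x t
    unfolding r_def using that by (intro cINF_lower bdd) auto
  have r_ge: "s \<le> r x" if "\<And>t. 0 \<le> t \<Longrightarrow> s \<le> m (x + t *\<^sub>R y) - t * m y" for x s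
    unfolding r_def using that by (intro cINF_greatest) auto
  have "sublinear r"
  proof (rule sublinearI)
    fix x1 x2
    have "r (x1 + x2) \<le> (m (x1 + t1 *\<^sub>R y) - t1 * m y) + (m (x2 + t2 *\<^sub>R y) - t2 * m y)"
      if "0 \<le> t1" "0 \<le> t2" for t1 t2
    proof -
      have "r (x1 + x2) \<le> m ((x1 + t1 *\<^sub>R y) + (x2 + t2 *\<^sub>R y)) - (t1 + t2) * m y"
        using r_le[of "t1 + t2" "x1 + x2"] that by (simp add: algebra_simps)
      then show ?thesis using sublinear_add[OF m, of "x1 + t1 *\<^sub>R y" "x2 + t2 *\<^sub>R y"]
        by (simp add: algebra_simps)
    qed
    then have "r (x1 + x2) - (m (x2 + t2 *\<^sub>R y) - t2 * m y) \<le> r x1" if "0 \<le> t2" for t2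
      using that by (intro r_ge) (simp add: algebra_simps)
    then have "r (x1 + x2) - r x1 \<le> r x2"
      by (intro r_ge) (simp add: algebra_simps)
    then show "r (x1 + x2) \<le> r x1 + r x2" by simp
  next
    fix c :: real and x assume c: "0 < c"
    have "r (c *\<^sub>R x) / c \<le> m (x + t *\<^sub>R y) - t * m y" if "0 \<le> t" for t
    proof -
      have "r (c *\<^sub>R x) \<le> m (c *\<^sub>R (x + t *\<^sub>R y)) - (c * t) * m y"
        using r_le[of "c * t" "c *\<^sub>R x"] that c by (simp add: algebra_simps)
      then show ?thesis using c sublinear_scale[OF m, of c "x + t *\<^sub>R y"] by (simp add: field_simps)
    qed
    then have "r (c *\<^sub>R x) / c \<le> r x" by (rule r_ge)
    then show "r (c *\<^sub>R x) \<le> c * r x" using c by (simp add: field_simps)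
  qed
  moreover have "r \<le> m" using r_le[of 0] by (simp add: le_fun_def)
  moreover have "r (- y) \<le> - m y" using r_le[of 1 "- y"] sublinear_zero[OF m] by simp
  ultimately show ?thesis by blast
qed

lemma minimal_sublinear_linear:
  assumes m: "sublinear m" and minimal: "\<And>r. sublinear r \<Longrightarrow> r \<le> m \<Longrightarrow> r = m"
  shows "linear m"
proof -
  have neg: "m (- y) = - m y" for y
  proof -
    obtain r where "sublinear r" "r \<le> m" "r (- y) \<le> - m y"
      using sublinear_lower_at_neg[OF m] by blast
    then show ?thesis using minimal sublinear_add_neg_nonneg[OF m, of y] by fastforce
  qed
  show ?thesis
  proof (rule linearI)
    fix x y
    show "m (x + y) = m x + m y"
      using sublinear_add[OF m, of x y] sublinear_add[OF m, of "x + y" "- y"] neg[of y] by simp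
  next
    fix c :: real and x
    show "m (c *\<^sub>R x) = c *\<^sub>R m x"
    proof (cases "0 \<le> c")
      case True then show ?thesis using sublinear_scale[OF m] by simp
    next
      case False
      then have "m (c *\<^sub>R x) = (- c) * m (- x)"
        using sublinear_scale[OF m, of "- c" "- x"] by simp
      then show ?thesis using neg[of x] by simp
    qed
  qed
qed

text \<open>Hahn-Banach via Zorn: a minimal sublinear functional below p is linear.\<close>
lemma sublinear_dominated_linear_exists:
  assumes p: "sublinear p"
  shows "\<exists>f. linear f \<and> (\<forall>x. f x \<le> p x)"
proof -
  define S where "S = {q. sublinear q \<and> q \<le> p}"
  define R where "R = {(q1, q2). q1 \<in> S \<and> q2 \<in> S \<and> q2 \<le> q1}"
  have pS: "p \<in> S" using p unfolding S_def by auto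
  have Field: "Field R = S"
    unfolding R_def Field_def by auto
  have po: "Partial_order R"
    unfolding Field partial_order_on_def preorder_on_def refl_on_def trans_def antisym_def R_def
    by (auto intro: order_trans simp: Field_def)
  have "\<exists>u\<in>Field R. \<forall>q\<in>C. (q, u) \<in> R" if C: "C \<in> Chains R" for C
  proof (cases "C = {}")
    case True then show ?thesis using pS Field by auto
  next
    case False
    have CS: "C \<subseteq> S" using C unfolding Chains_def R_def by auto
    have comp: "q1 \<le> q2 \<or> q2 \<le> q1" if "q1 \<in> C" "q2 \<in> C" for q1 q2
      using C that unfolding Chains_def R_def by auto
    have q: "sublinear q" "q \<le> p" if "q \<in> C" for q using that CS unfolding S_def by auto
    define u where "u x = (INF q\<in>C. q x)" for x
    have bdd: "bdd_below ((\<lambda>q. q x) ` C)" for x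
    proof (rule bdd_belowI2[where m="- p (- x)"])
      fix q assume "q \<in> C"
      then show "- p (- x) \<le> q x"
        using q sublinear_add_neg_nonneg[of q x] le_funD[of q p "- x"] by fastforce
    qed
    have u_le: "u x \<le> q x" if "q \<in> C" for q x
      unfolding u_def using that by (intro cINF_lower bdd)
    have u_ge: "s \<le> u x" if "\<And>q. q \<in> C \<Longrightarrow> s \<le> q x" for x s
      unfolding u_def using that False by (intro cINF_greatest) auto
    have "sublinear u"
    proof (rule sublinearI)
      fix x y
      have "u (x + y) \<le> q1 x + q2 y" if q12: "q1 \<in> C" "q2 \<in> C" for q1 q2
      proof -
        obtain q where "q \<in> C" "q \<le> q1" "q \<le> q2" using comp[OF q12] q12 by auto
        then show ?thesis
          using u_le[of q "x + y"] sublinear_add[OF q(1), of q x y] le_funD[of q q1 x] le_funD[of q q2 y]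
          by linarith
      qed
      then have "u (x + y) - q2 y \<le> u x" if "q2 \<in> C" for q2
        using that by (intro u_ge) (simp add: algebra_simps)
      then have "u (x + y) - u x \<le> u y" by (intro u_ge) (simp add: algebra_simps)
      then show "u (x + y) \<le> u x + u y" by simp
    next
      fix c :: real and x assume c: "0 < c"
      have "u (c *\<^sub>R x) / c \<le> q x" if "q \<in> C" for q
        using u_le[OF that, of "c *\<^sub>R x"] sublinear_scale[OF q(1)[OF that], of c x] c
        by (simp add: field_simps)
      then have "u (c *\<^sub>R x) / c \<le> u x" by (rule u_ge)
      then show "u (c *\<^sub>R x) \<le> c * u x" using c by (simp add: field_simps)
    qed
    moreover obtain q0 where "q0 \<in> C" using False by auto
    then have "u \<le> p" using u_le q(2) by (fastforce simp: le_fun_def intro: order_trans)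
    ultimately have "u \<in> S" unfolding S_def by auto
    moreover have "u \<le> q" if "q \<in> C" for q using u_le[OF that] by (simp add: le_fun_def)
    ultimately show ?thesis using CS Field unfolding R_def by blast
  qed
  from Zorns_po_lemma[OF po this] obtain m where
    mS: "m \<in> S" and m_min: "\<And>q. q \<in> S \<Longrightarrow> (m, q) \<in> R \<Longrightarrow> q = m"
    unfolding Field by blast
  have "linear m"
  proof (rule minimal_sublinear_linear)
    show "sublinear m" using mS unfolding S_def by auto
    fix r assume "sublinear r" "r \<le> m"
    moreover have "m \<le> p" using mS unfolding S_def by auto
    ultimately show "r = m" using m_min mS unfolding R_def S_def by (auto intro: order_trans)
  qed
  moreover have "\<forall>x. m x \<le> p x" using mS unfolding S_def by (auto dest: le_funD)
  ultimately show ?thesis by blast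
qed

lemma strictly_convex_norming_unique:
  fixes a b :: "'b::real_normed_vector"
  assumes sc: "strictly_convex_space TYPE('b)" and lin: "linear \<phi>"
    and bound: "\<And>y. \<phi> y \<le> C * norm y" and C: "0 < C"
    and na: "norm a \<le> r" and nb: "norm b \<le> r"
    and \<phi>a: "C * r \<le> \<phi> a" and \<phi>b: "C * r \<le> \<phi> b"
  shows "a = b"
proof (cases "0 < r")
  case False
  then show ?thesis using na nb by (metis norm_le_zero_iff order_trans not_le)
next
  case r: True
  define a' b' where "a' = (1 / r) *\<^sub>R a" and "b' = (1 / r) *\<^sub>R b"
  have \<phi>a': "C \<le> \<phi> a'" and \<phi>b': "C \<le> \<phi> b'"
    using \<phi>a \<phi>b r lin unfolding a'_def b'_def by (simp_all add: linear_scale field_simps)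
  have "C \<le> C * norm a'" "C \<le> C * norm b'"
    using \<phi>a' \<phi>b' bound[of a'] bound[of b'] by linarith+
  moreover have "norm a' \<le> 1" "norm b' \<le> 1"
    using na nb r unfolding a'_def b'_def by (simp_all add: field_simps)
  ultimately have "norm a' = 1" "norm b' = 1" using C by (simp_all add: mult_le_cancel_left1)
  show ?thesis
  proof (rule ccontr)
    assume "a \<noteq> b"
    then have "a' \<noteq> b'" using r unfolding a'_def b'_def by simp
    then have "norm ((1/2) *\<^sub>R (a' + b')) < 1"
      using sc \<open>norm a' = 1\<close> \<open>norm b' = 1\<close> unfolding strictly_convex_space_def by blast
    moreover have "C \<le> \<phi> ((1/2) *\<^sub>R (a' + b'))"
      using \<phi>a' \<phi>b' lin by (simp add: linear_scale linear_add)
    ultimately show False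
      using bound[of "(1/2) *\<^sub>R (a' + b')"] C mult_strict_left_mono[of _ 1 C] by fastforce
  qed
qed

lemma J_eps_0_pairing:
  fixes v :: "'a::real_normed_vector"
  assumes J: "ws \<in> J_eps 0 v" and v0: "v \<noteq> 0"
  shows "blinfun_apply ws v = (norm v)\<^sup>2" and "norm ws = norm v"
proof -
  have H: "(1/2) * (norm v)\<^sup>2 + blinfun_apply ws (y - v) \<le> (1/2) * (norm y)\<^sup>2" for y
    using J unfolding J_eps_def by auto
  define N a where "N = (norm v)\<^sup>2" and "a = blinfun_apply ws v"
  have N: "0 < N" using v0 unfolding N_def by simp
  have "(norm ((a / N) *\<^sub>R v))\<^sup>2 = (a / N) * (a / N) * N"
    unfolding N_def by (simp add: power_mult_distrib power2_eq_square)
  then have "(1/2) * N + ((a / N) * a - a) \<le> (1/2) * ((a / N) * (a / N) * N)"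
    using H[of "(a / N) *\<^sub>R v"] unfolding N_def a_def
    by (simp add: blinfun.diff_right blinfun.scaleR_right)
  moreover have "(a - N)\<^sup>2 = 2 * N * ((1/2) * N + ((a / N) * a - a) - (1/2) * ((a / N) * (a / N) * N))"
    using N by (simp add: field_simps power2_eq_square)
  ultimately have "(a - N)\<^sup>2 \<le> 0"
    using N by (simp add: mult_nonneg_nonpos)
  then show av: "blinfun_apply ws v = (norm v)\<^sup>2" unfolding a_def N_def by simp
  \<comment> \<open>Testing J at a rescaling of y to the sphere of radius norm v.\<close>
  have up: "blinfun_apply ws y \<le> norm v * norm y" for y
  proof (cases "y = 0")
    case False
    define c where "c = norm v / norm y"
    have c: "0 < c" "norm (c *\<^sub>R y) = norm v" using False v0 unfolding c_def by simp_all
    then have "c * blinfun_apply ws y \<le> (norm v)\<^sup>2"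
      using H[of "c *\<^sub>R y"] av by (simp add: blinfun.diff_right blinfun.scaleR_right)
    also have "\<dots> = c * (norm v * norm y)"
      using False unfolding c_def by (simp add: power2_eq_square)
    finally show ?thesis using c by simp
  qed simp
  show "norm ws = norm v"
  proof (rule antisym)
    show "norm ws \<le> norm v"
    proof (rule norm_blinfun_bound)
      fix y
      show "norm (blinfun_apply ws y) \<le> norm v * norm y"
        using up[of y] up[of "- y"] by (simp add: blinfun.minus_right)
    qed simp
    have "(norm v)\<^sup>2 \<le> norm ws * norm v" using av norm_blinfun[of ws v] by simp
    then show "norm v \<le> norm ws" using v0 by (simp add: power2_eq_square)
  qed
qed

lemma J_eps_0_nonempty: "J_eps 0 (v :: 'a::real_normed_vector) \<noteq> {}"
proof -
  obtain r where r: "sublinear r" "r \<le> norm" "r (- v) \<le> - norm v"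
    using sublinear_lower_at_neg[OF sublinear_norm] by blast
  obtain f where f: "linear f" "\<And>x. f x \<le> r x"
    using sublinear_dominated_linear_exists[OF r(1)] by blast
  have f_le: "f x \<le> norm x" for x using f(2)[of x] le_funD[OF r(2), of x] by simp
  have f_neg: "f (- x) = - f x" for x using f(1) by (simp add: linear_neg)
  have f_abs: "\<bar>f x\<bar> \<le> norm x" for x using f_le[of x] f_le[of "- x"] f_neg[of x] by simp
  have fv: "f v = norm v" using f_le[of v] f(2)[of "- v"] r(3) f_neg[of v] by simp
  have "bounded_linear (\<lambda>x. norm v * f x)"
  proof (rule bounded_linear_intro[where K="norm v"])
    show "norm v * f (x + y) = norm v * f x + norm v * f y" for x y
      using f(1) by (simp add: linear_add algebra_simps)
    show "norm v * f (c *\<^sub>R x) = c *\<^sub>R (norm v * f x)" for c x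
      using f(1) by (simp add: linear_scale)
    show "norm (norm v * f x) \<le> norm x * norm v" for x
      using f_abs[of x] by (simp add: abs_mult mult_left_mono mult.commute)
  qed
  then have ws: "blinfun_apply (Blinfun (\<lambda>x. norm v * f x)) = (\<lambda>x. norm v * f x)"
    by (rule bounded_linear_Blinfun_apply)
  have "Blinfun (\<lambda>x. norm v * f x) \<in> J_eps 0 v"
    unfolding J_eps_def
  proof (intro CollectI allI)
    fix y
    have "norm v * f y \<le> norm v * norm y" using f_le[of y] by (simp add: mult_left_mono)
    moreover have "0 \<le> (norm v - norm y)\<^sup>2" by simp
    ultimately show "(1/2) * (norm v)\<^sup>2 + blinfun_apply (Blinfun (\<lambda>x. norm v * f x)) (y - v)
        \<le> (1/2) * (norm y)\<^sup>2 + 0"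
      using f(1) unfolding ws by (simp add: linear_diff fv power2_eq_square algebra_simps)
  qed
  then show ?thesis by blast
qed

lemma duality_map_in_J_eps:
  fixes v :: "'a::real_normed_vector"
  assumes sc: "strictly_convex_space TYPE('a \<Rightarrow>\<^sub>L real)" and v0: "v \<noteq> 0"
  shows "duality_map v \<in> J_eps 0 v"
  unfolding duality_map_def
proof (rule theI')
  have "ws1 = ws2" if J1: "ws1 \<in> J_eps 0 v" and J2: "ws2 \<in> J_eps 0 v" for ws1 ws2
  proof (rule strictly_convex_norming_unique[OF sc, where \<phi>="\<lambda>ws. blinfun_apply ws v" and C="norm v" and r="norm v"])
    show "linear (\<lambda>ws :: 'a \<Rightarrow>\<^sub>L real. blinfun_apply ws v)"
      by (rule bounded_linear.linear[OF bounded_linear_apply_blinfun])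
    show "blinfun_apply ws v \<le> norm v * norm ws" for ws :: "'a \<Rightarrow>\<^sub>L real"
      using norm_blinfun[of ws v] by (simp add: mult.commute)
    show "0 < norm v" using v0 by simp
    show "norm ws1 \<le> norm v" "norm ws2 \<le> norm v"
      using J_eps_0_pairing(2)[OF J1 v0] J_eps_0_pairing(2)[OF J2 v0] by simp_all
    show "norm v * norm v \<le> blinfun_apply ws1 v" "norm v * norm v \<le> blinfun_apply ws2 v"
      using J_eps_0_pairing(1)[OF J1 v0] J_eps_0_pairing(1)[OF J2 v0] by (simp_all add: power2_eq_square)
  qed
  moreover obtain ws where "ws \<in> J_eps 0 v" using J_eps_0_nonempty by blast
  ultimately show "\<exists>!ws. ws \<in> J_eps 0 v" by (intro ex1I)
qed

lemma J_eps_near_J_eps_0: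
  fixes v w :: "'a::real_normed_vector"
  assumes z: "z \<in> J_eps t w" and d: "d \<in> J_eps 0 v" and v0: "v \<noteq> 0"
  defines "e \<equiv> norm (z - d)"
  shows "\<bar>norm w - norm v\<bar> \<le> e + sqrt (4 * e * norm v + 2 * t + e\<^sup>2)"
    and "(1/2) * (norm v)\<^sup>2 - e * norm v - t + (1/2) * (norm w)\<^sup>2 - e * norm w \<le> blinfun_apply d w"
    and "blinfun_apply d w \<le> norm v * norm w"
proof -
  define nv W where "nv = norm v" and "W = norm w"
  have H: "(1/2) * W\<^sup>2 + blinfun_apply z v - blinfun_apply z w \<le> (1/2) * nv\<^sup>2 + t"
    using z unfolding J_eps_def nv_def W_def by (simp add: blinfun.diff_right add_diff_eq)
  have zd: "\<bar>blinfun_apply z x - blinfun_apply d x\<bar> \<le> e * norm x" for x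
    using norm_blinfun[of "z - d" x] unfolding e_def by (simp add: blinfun.diff_left mult.commute)
  have zv: "nv\<^sup>2 - e * nv \<le> blinfun_apply z v"
    using zd[of v] J_eps_0_pairing(1)[OF d v0] unfolding nv_def by linarith
  show dw: "blinfun_apply d w \<le> norm v * norm w"
    using norm_blinfun[of d w] J_eps_0_pairing(2)[OF d v0] by simp
  have zw: "blinfun_apply z w \<le> (nv + e) * W"
    using zd[of w] dw unfolding nv_def W_def by (simp add: algebra_simps)
  have "(W - nv - e)\<^sup>2 \<le> 4 * e * nv + 2 * t + e\<^sup>2"
    using H zv zw by (simp add: power2_eq_square algebra_simps)
  then have "\<bar>W - nv - e\<bar> \<le> sqrt (4 * e * nv + 2 * t + e\<^sup>2)"
    using real_sqrt_le_mono by fastforce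
  moreover have "0 \<le> e" unfolding e_def by simp
  ultimately show "\<bar>norm w - norm v\<bar> \<le> e + sqrt (4 * e * norm v + 2 * t + e\<^sup>2)"
    unfolding nv_def W_def by linarith
  show "(1/2) * (norm v)\<^sup>2 - e * norm v - t + (1/2) * (norm w)\<^sup>2 - e * norm w \<le> blinfun_apply d w"
    using H zv zd[of w] unfolding nv_def W_def by (simp add: power2_eq_square algebra_simps)
qed

lemma tendsto_norm_pairing_of_J_eps:
  fixes v :: "'a::real_normed_vector" and w :: "'i \<Rightarrow> 'a"
  assumes d: "d \<in> J_eps 0 v" and v0: "v \<noteq> 0"
    and z: "eventually (\<lambda>i. z i \<in> J_eps (t i) (w i)) F"
    and t: "(t \<longlongrightarrow> 0) F" and e: "((\<lambda>i. norm (z i - d)) \<longlongrightarrow> 0) F"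
  shows "((\<lambda>i. norm (w i)) \<longlongrightarrow> norm v) F"
    and "((\<lambda>i. blinfun_apply d (w i)) \<longlongrightarrow> (norm v)\<^sup>2) F"
proof -
  let ?e = "\<lambda>i. norm (z i - d)"
  note est = J_eps_near_J_eps_0[OF _ d v0]
  have "((\<lambda>i. norm (w i) - norm v) \<longlongrightarrow> 0) F"
  proof (rule Lim_null_comparison)
    show "eventually (\<lambda>i. norm (norm (w i) - norm v)
        \<le> ?e i + sqrt (4 * ?e i * norm v + 2 * t i + (?e i)\<^sup>2)) F"
      using z by eventually_elim (use est(1) in auto)
    have "((\<lambda>i. ?e i + sqrt (4 * ?e i * norm v + 2 * t i + (?e i)\<^sup>2))
        \<longlongrightarrow> 0 + sqrt (4 * 0 * norm v + 2 * 0 + 0\<^sup>2)) F"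
      by (intro tendsto_intros e t)
    then show "((\<lambda>i. ?e i + sqrt (4 * ?e i * norm v + 2 * t i + (?e i)\<^sup>2)) \<longlongrightarrow> 0) F"
      by simp
  qed
  then show w: "((\<lambda>i. norm (w i)) \<longlongrightarrow> norm v) F" by (rule LIM_zero_cancel)
  show "((\<lambda>i. blinfun_apply d (w i)) \<longlongrightarrow> (norm v)\<^sup>2) F"
  proof (rule tendsto_sandwich)
    show "eventually (\<lambda>i. (1/2) * (norm v)\<^sup>2 - ?e i * norm v - t i + (1/2) * (norm (w i))\<^sup>2
        - ?e i * norm (w i) \<le> blinfun_apply d (w i)) F"
      using z by eventually_elim (use est(2) in auto)
    show "eventually (\<lambda>i. blinfun_apply d (w i) \<le> norm v * norm (w i)) F"
      using z by eventually_elim (use est(3) in auto)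
    have "((\<lambda>i. (1/2) * (norm v)\<^sup>2 - ?e i * norm v - t i + (1/2) * (norm (w i))\<^sup>2 - ?e i * norm (w i))
        \<longlongrightarrow> (1/2) * (norm v)\<^sup>2 - 0 * norm v - 0 + (1/2) * (norm v)\<^sup>2 - 0 * norm v) F"
      by (intro tendsto_intros e t w)
    then show "((\<lambda>i. (1/2) * (norm v)\<^sup>2 - ?e i * norm v - t i + (1/2) * (norm (w i))\<^sup>2
        - ?e i * norm (w i)) \<longlongrightarrow> (norm v)\<^sup>2) F"
      by simp
    have "((\<lambda>i. norm v * norm (w i)) \<longlongrightarrow> norm v * norm v) F" by (intro tendsto_intros w)
    then show "((\<lambda>i. norm v * norm (w i)) \<longlongrightarrow> (norm v)\<^sup>2) F" by (simp add: power2_eq_square)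
  qed
qed

definition real_Limsup :: "'i filter \<Rightarrow> ('i \<Rightarrow> real) \<Rightarrow> real" where
  "real_Limsup G u = Inf {s. eventually (\<lambda>i. u i \<le> s) G}"

text \<open>Without the boundedness hypothesis below, the set of eventual upper bounds need not be
  bounded below and Inf returns a junk value.\<close>

lemma real_Limsup_le:
  assumes "eventually (\<lambda>i. \<bar>u i\<bar> \<le> B) G" and "G \<noteq> bot" and "eventually (\<lambda>i. u i \<le> s) G"
  shows "real_Limsup G u \<le> s"
  unfolding real_Limsup_def
proof (rule cInf_lower)
  show "s \<in> {s. eventually (\<lambda>i. u i \<le> s) G}" using assms(3) by simp
  show "bdd_below {s. eventually (\<lambda>i. u i \<le> s) G}"
  proof (rule bdd_belowI)
    fix s' assume "s' \<in> {s. eventually (\<lambda>i. u i \<le> s) G}"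
    then have "eventually (\<lambda>i. \<bar>u i\<bar> \<le> B \<and> u i \<le> s') G"
      using assms(1) by (simp add: eventually_conj)
    then obtain i where "\<bar>u i\<bar> \<le> B \<and> u i \<le> s'" using eventually_happens'[OF assms(2)] by blast
    then show "- B \<le> s'" by linarith
  qed
qed

lemma real_Limsup_greatest:
  assumes "eventually (\<lambda>i. \<bar>u i\<bar> \<le> B) G" and "\<And>s. eventually (\<lambda>i. u i \<le> s) G \<Longrightarrow> r \<le> s"
  shows "r \<le> real_Limsup G u"
  unfolding real_Limsup_def
proof (rule cInf_greatest)
  have "eventually (\<lambda>i. u i \<le> B) G" using assms(1) by (rule eventually_mono) simp
  then show "{s. eventually (\<lambda>i. u i \<le> s) G} \<noteq> {}" by blast
qed (use assms(2) in auto)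

lemma real_Limsup_le_lim:
  assumes "eventually (\<lambda>i. \<bar>u i\<bar> \<le> B) G" and "G \<noteq> bot"
    and "eventually (\<lambda>i. u i \<le> g i) G" and "(g \<longlongrightarrow> a) G"
  shows "real_Limsup G u \<le> a"
proof (rule field_le_epsilon)
  fix \<epsilon> :: real assume "0 < \<epsilon>"
  then have "eventually (\<lambda>i. g i < a + \<epsilon>) G" using assms(4) by (intro order_tendstoD) auto
  with assms(3) have "eventually (\<lambda>i. u i \<le> a + \<epsilon>) G" by eventually_elim auto
  then show "real_Limsup G u \<le> a + \<epsilon>" by (rule real_Limsup_le[OF assms(1,2)])
qed

lemma sublinear_real_Limsup_apply:
  fixes w :: "'i \<Rightarrow> 'a::real_normed_vector"
  assumes G: "G \<noteq> bot" and M: "eventually (\<lambda>i. norm (w i) \<le> M) G"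
  shows "sublinear (\<lambda>h :: 'a \<Rightarrow>\<^sub>L real. real_Limsup G (\<lambda>i. blinfun_apply h (w i)))"
    (is "sublinear ?p")
proof -
  have bnd: "eventually (\<lambda>i. \<bar>blinfun_apply h (w i)\<bar> \<le> norm h * M) G" for h :: "'a \<Rightarrow>\<^sub>L real"
    using M
  proof eventually_elim
    case (elim i)
    then show ?case
      using norm_blinfun[of h "w i"] mult_left_mono[OF elim, of "norm h"] by simp
  qed
  have p_le: "?p h \<le> s" if "eventually (\<lambda>i. blinfun_apply h (w i) \<le> s) G" for h s
    by (rule real_Limsup_le[OF bnd G that])
  have p_ge: "r \<le> ?p h" if "\<And>s. eventually (\<lambda>i. blinfun_apply h (w i) \<le> s) G \<Longrightarrow> r \<le> s" for h r
    by (rule real_Limsup_greatest[OF bnd that])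
  show ?thesis
  proof (rule sublinearI)
    fix a b :: "'a \<Rightarrow>\<^sub>L real"
    have "?p (a + b) \<le> s1 + s2" if "eventually (\<lambda>i. blinfun_apply a (w i) \<le> s1) G"
      "eventually (\<lambda>i. blinfun_apply b (w i) \<le> s2) G" for s1 s2
      using that by (intro p_le, eventually_elim) (simp add: blinfun.add_left)
    then have "?p (a + b) - s2 \<le> ?p a" if "eventually (\<lambda>i. blinfun_apply b (w i) \<le> s2) G" for s2
      using that by (intro p_ge) (simp add: algebra_simps)
    then have "?p (a + b) - ?p a \<le> ?p b" by (intro p_ge) (simp add: algebra_simps)
    then show "?p (a + b) \<le> ?p a + ?p b" by simp
  next
    fix c :: real and h :: "'a \<Rightarrow>\<^sub>L real" assume c: "0 < c"
    have "?p (c *\<^sub>R h) / c \<le> s" if "eventually (\<lambda>i. blinfun_apply h (w i) \<le> s) G" for s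
    proof -
      have "eventually (\<lambda>i. blinfun_apply (c *\<^sub>R h) (w i) \<le> c * s) G"
        using that by eventually_elim (use c in \<open>simp add: blinfun.scaleR_left\<close>)
      then show ?thesis using c p_le by (simp add: field_simps)
    qed
    then have "?p (c *\<^sub>R h) / c \<le> ?p h" by (rule p_ge)
    then show "?p (c *\<^sub>R h) \<le> c * ?p h" using c by (simp add: field_simps)
  qed
qed

lemma bidual_functional_below_real_Limsup:
  fixes w :: "'i \<Rightarrow> 'a::real_normed_vector"
  assumes G: "G \<noteq> bot" and w: "((\<lambda>i. norm (w i)) \<longlongrightarrow> \<rho>) G"
  shows "\<exists>\<Psi> :: ('a \<Rightarrow>\<^sub>L real) \<Rightarrow>\<^sub>L real. norm \<Psi> \<le> \<rho>
    \<and> (\<forall>h s. eventually (\<lambda>i. blinfun_apply h (w i) \<le> s) G \<longrightarrow> blinfun_apply \<Psi> h \<le> s)"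
proof -
  let ?p = "\<lambda>h :: 'a \<Rightarrow>\<^sub>L real. real_Limsup G (\<lambda>i. blinfun_apply h (w i))"
  have M: "eventually (\<lambda>i. norm (w i) \<le> \<rho> + 1) G"
    using order_tendstoD(2)[OF w, of "\<rho> + 1"] by (auto elim: eventually_mono)
  have bnd: "eventually (\<lambda>i. \<bar>blinfun_apply h (w i)\<bar> \<le> norm h * (\<rho> + 1)) G" for h :: "'a \<Rightarrow>\<^sub>L real"
    using M by eventually_elim (metis norm_blinfun mult_left_mono norm_ge_zero order_trans real_norm_def)
  obtain \<Phi> where \<Phi>: "linear \<Phi>" "\<And>h. \<Phi> h \<le> ?p h"
    using sublinear_dominated_linear_exists[OF sublinear_real_Limsup_apply[OF G M]] by blast
  have p_norm: "?p h \<le> norm h * \<rho>" for h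
  proof (rule real_Limsup_le_lim[OF bnd G])
    show "eventually (\<lambda>i. blinfun_apply h (w i) \<le> norm h * norm (w i)) G"
      using norm_blinfun[of h] by (intro always_eventually) (metis abs_le_D1 real_norm_def)
    show "((\<lambda>i. norm h * norm (w i)) \<longlongrightarrow> norm h * \<rho>) G" by (intro tendsto_intros w)
  qed
  have \<Phi>_abs: "\<bar>\<Phi> h\<bar> \<le> norm h * \<rho>" for h
    using \<Phi>(2)[of h] p_norm[of h] \<Phi>(2)[of "- h"] p_norm[of "- h"] linear_neg[OF \<Phi>(1), of h] by auto
  have "bounded_linear \<Phi>"
    using \<Phi>(1) \<Phi>_abs by (intro bounded_linear_intro[where K=\<rho>]) (auto simp: linear_add linear_scale)
  then have \<Psi>: "blinfun_apply (Blinfun \<Phi>) = \<Phi>" by (rule bounded_linear_Blinfun_apply)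
  have "0 \<le> \<rho>" using tendsto_le[OF G w tendsto_const] by simp
  then have "norm (Blinfun \<Phi>) \<le> \<rho>"
    using \<Phi>_abs by (intro norm_blinfun_bound) (auto simp: \<Psi> mult.commute)
  moreover have "\<Phi> h \<le> s" if "eventually (\<lambda>i. blinfun_apply h (w i) \<le> s) G" for h s
    using \<Phi>(2)[of h] real_Limsup_le[OF bnd G that] by linarith
  ultimately show ?thesis by (metis \<Psi>)
qed

lemma weak_tendsto_of_duality_pairing:
  fixes w :: "'i \<Rightarrow> 'a::real_normed_vector" and g :: "'a \<Rightarrow>\<^sub>L real"
  assumes sc: "strictly_convex_space TYPE(('a \<Rightarrow>\<^sub>L real) \<Rightarrow>\<^sub>L real)" and v0: "v \<noteq> 0"
    and d: "d \<in> J_eps 0 v"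
    and w: "((\<lambda>i. norm (w i)) \<longlongrightarrow> norm v) F"
    and dw: "((\<lambda>i. blinfun_apply d (w i)) \<longlongrightarrow> (norm v)\<^sup>2) F"
  shows "((\<lambda>i. blinfun_apply g (w i)) \<longlongrightarrow> blinfun_apply g v) F"
proof -
  have not_freq: "\<not> frequently (\<lambda>i. blinfun_apply h v + \<epsilon> \<le> blinfun_apply h (w i)) F"
    if \<epsilon>: "0 < \<epsilon>" for h :: "'a \<Rightarrow>\<^sub>L real" and \<epsilon> :: real
  proof
    define A where "A = {i. blinfun_apply h v + \<epsilon> \<le> blinfun_apply h (w i)}"
    define G where "G = inf F (principal A)"
    assume "frequently (\<lambda>i. blinfun_apply h v + \<epsilon> \<le> blinfun_apply h (w i)) F"
    then have G: "G \<noteq> bot"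
      unfolding G_def A_def trivial_limit_def eventually_inf_principal frequently_def by simp
    have "G \<le> F" unfolding G_def by simp
    note wG = tendsto_mono[OF this w] and dG = tendsto_mono[OF this dw]
    obtain \<Psi> :: "('a \<Rightarrow>\<^sub>L real) \<Rightarrow>\<^sub>L real" where \<Psi>: "norm \<Psi> \<le> norm v"
      and \<Psi>_le: "\<And>h s. eventually (\<lambda>i. blinfun_apply h (w i) \<le> s) G \<Longrightarrow> blinfun_apply \<Psi> h \<le> s"
      using bidual_functional_below_real_Limsup[OF G wG] by blast
    have \<Psi>d: "(norm v)\<^sup>2 \<le> blinfun_apply \<Psi> d"
    proof (rule field_le_epsilon)
      fix \<delta> :: real assume "0 < \<delta>"
      then have "eventually (\<lambda>i. blinfun_apply (- d) (w i) \<le> \<delta> - (norm v)\<^sup>2) G"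
        using order_tendstoD(1)[OF dG, of "(norm v)\<^sup>2 - \<delta>"]
        by (auto simp: blinfun.minus_left elim: eventually_mono)
      then show "(norm v)\<^sup>2 \<le> blinfun_apply \<Psi> d + \<delta>"
        using \<Psi>_le by (fastforce simp: blinfun.minus_right)
    qed
    have "eventually (\<lambda>i. blinfun_apply (- h) (w i) \<le> - (blinfun_apply h v + \<epsilon>)) G"
      unfolding G_def eventually_inf_principal A_def
      by (intro always_eventually) (simp add: blinfun.minus_left)
    then have \<Psi>h: "blinfun_apply h v + \<epsilon> \<le> blinfun_apply \<Psi> h"
      using \<Psi>_le by (fastforce simp: blinfun.minus_right)
    define V where "V = Blinfun (\<lambda>h :: 'a \<Rightarrow>\<^sub>L real. blinfun_apply h v)"
    have V: "blinfun_apply V = (\<lambda>h. blinfun_apply h v)"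
      unfolding V_def by (rule bounded_linear_Blinfun_apply[OF bounded_linear_apply_blinfun])
    have "\<Psi> = V"
    proof (rule strictly_convex_norming_unique[OF sc,
          where \<phi>="\<lambda>\<Psi>. blinfun_apply \<Psi> d" and C="norm v" and r="norm v"])
      show "linear (\<lambda>\<Psi> :: ('a \<Rightarrow>\<^sub>L real) \<Rightarrow>\<^sub>L real. blinfun_apply \<Psi> d)"
        by (rule bounded_linear.linear[OF bounded_linear_apply_blinfun])
      show "blinfun_apply \<Psi>' d \<le> norm v * norm \<Psi>'" for \<Psi>' :: "('a \<Rightarrow>\<^sub>L real) \<Rightarrow>\<^sub>L real"
        using norm_blinfun[of \<Psi>' d] J_eps_0_pairing(2)[OF d v0] by (simp add: mult.commute)
      show "0 < norm v" using v0 by simp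
      show "norm \<Psi> \<le> norm v" by (rule \<Psi>)
      show "norm V \<le> norm v"
      proof (rule norm_blinfun_bound)
        show "norm (blinfun_apply V h) \<le> norm v * norm h" for h :: "'a \<Rightarrow>\<^sub>L real"
          using norm_blinfun[of h v] by (simp add: V mult.commute)
      qed simp
      show "norm v * norm v \<le> blinfun_apply \<Psi> d" using \<Psi>d by (simp add: power2_eq_square)
      show "norm v * norm v \<le> blinfun_apply V d"
        using J_eps_0_pairing(1)[OF d v0] by (simp add: V power2_eq_square)
    qed
    then show False using \<Psi>h \<epsilon> by (simp add: V)
  qed
  show ?thesis
  proof (rule order_tendstoI)
    fix a assume "a < blinfun_apply g v"
    then show "eventually (\<lambda>i. a < blinfun_apply g (w i)) F"
      using not_freq[of "blinfun_apply g v - a" "- g"] by (simp add: not_frequently blinfun.minus_left not_le)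
  next
    fix a assume "blinfun_apply g v < a"
    then show "eventually (\<lambda>i. blinfun_apply g (w i) < a) F"
      using not_freq[of "a - blinfun_apply g v" g] by (simp add: not_frequently not_le)
  qed
qed

lemma w_Kadec_Klee_tendsto:
  fixes w :: "'i \<Rightarrow> 'a::real_normed_vector"
  assumes "w_Kadec_Klee TYPE('a)"
    and "\<And>f :: 'a \<Rightarrow>\<^sub>L real. ((\<lambda>i. blinfun_apply f (w i)) \<longlongrightarrow> blinfun_apply f v) F"
    and "((\<lambda>i. norm (w i)) \<longlongrightarrow> norm v) F"
  shows "(w \<longlongrightarrow> v) F"
proof -
  have "((\<lambda>y. y) \<longlongrightarrow> v) (filtermap w F)"
  proof (rule assms(1)[unfolded w_Kadec_Klee_def, rule_format], intro conjI allI)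
    show "((\<lambda>y. blinfun_apply f y) \<longlongrightarrow> blinfun_apply f v) (filtermap w F)"
      for f :: "'a \<Rightarrow>\<^sub>L real"
      using assms(2)[of f] by (simp add: filterlim_filtermap)
    show "((\<lambda>y. norm y) \<longlongrightarrow> norm v) (filtermap w F)"
      using assms(3) by (simp add: filterlim_filtermap)
  qed
  then show ?thesis by (simp add: filterlim_filtermap)
qed

definition tail_filter :: "'i set \<Rightarrow> ('i \<Rightarrow> 'i \<Rightarrow> bool) \<Rightarrow> 'i filter" where
  "tail_filter I le = (INF i0\<in>I. principal {i\<in>I. le i0 i})"

lemma eventually_tail_filter:
  assumes "directed I le"
  shows "eventually P (tail_filter I le) \<longleftrightarrow> (\<exists>i0\<in>I. \<forall>i\<in>I. le i0 i \<longrightarrow> P i)"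
proof -
  have "eventually P (tail_filter I le) \<longleftrightarrow> (\<exists>i0\<in>I. eventually P (principal {i\<in>I. le i0 i}))"
    unfolding tail_filter_def
  proof (rule eventually_INF_base)
    show "I \<noteq> {}" using assms unfolding directed_def by auto
    fix a b assume ab: "a \<in> I" "b \<in> I"
    then obtain k where k: "k \<in> I" "le a k" "le b k" using assms unfolding directed_def by blast
    then have "{i\<in>I. le k i} \<subseteq> {i\<in>I. le a i} \<inter> {i\<in>I. le b i}"
      using assms ab unfolding directed_def by blast
    then show "\<exists>k\<in>I. principal {i\<in>I. le k i} \<le> inf (principal {i\<in>I. le a i}) (principal {i\<in>I. le b i})"
      using k by auto
  qed
  then show ?thesis by (auto simp: eventually_principal)
qed

lemma net_lim_iff_tendsto_tail_filter:
  "directed I le \<Longrightarrow> net_lim I le x l \<longleftrightarrow> (x \<longlongrightarrow> l) (tail_filter I le)"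
  unfolding net_lim_def tendsto_def by (simp add: eventually_tail_filter) blast

text \<open>The second index component is a dummy, present only to match the index type of the
  theorem.\<close>
lemma net_lim_subnet_self:
  fixes I :: "'i set" and x :: "'i \<Rightarrow> 'a::topological_space"
  assumes dir: "directed I le" and lim: "net_lim I le x l"
  shows "\<exists>(K :: ('i \<times> 'b) set) leK \<phi>. subnet_map K leK \<phi> I le \<and> net_lim K leK (\<lambda>k. x (\<phi> k)) l"
proof -
  define K :: "('i \<times> 'b) set" where "K = (\<lambda>i. (i, undefined)) ` I"
  define leK :: "'i \<times> 'b \<Rightarrow> 'i \<times> 'b \<Rightarrow> bool" where "leK a b = le (fst a) (fst b)" for a b
  have fst_K: "fst k \<in> I" if "k \<in> K" for k using that unfolding K_def by auto
  have lift: "(i, undefined) \<in> K" if "i \<in> I" for i using that unfolding K_def by auto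
  have I: "I \<noteq> {}" "\<And>i. i \<in> I \<Longrightarrow> le i i"
    "\<And>i j k. i \<in> I \<Longrightarrow> j \<in> I \<Longrightarrow> k \<in> I \<Longrightarrow> le i j \<Longrightarrow> le j k \<Longrightarrow> le i k"
    "\<And>i j. i \<in> I \<Longrightarrow> j \<in> I \<Longrightarrow> \<exists>k\<in>I. le i k \<and> le j k"
    using dir unfolding directed_def by blast+
  have "directed K leK"
    unfolding directed_def
  proof (intro conjI ballI impI)
    show "K \<noteq> {}" using I(1) unfolding K_def by simp
    show "leK a a" if "a \<in> K" for a
      using I(2)[OF fst_K[OF that]] unfolding leK_def .
    show "leK a c" if "a \<in> K" "b \<in> K" "c \<in> K" "leK a b \<and> leK b c" for a b c
      using I(3)[OF fst_K[OF that(1)] fst_K[OF that(2)] fst_K[OF that(3)]] that(4)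
      unfolding leK_def by blast
    show "\<exists>c\<in>K. leK a c \<and> leK b c" if ab: "a \<in> K" "b \<in> K" for a b
    proof -
      obtain k where "k \<in> I" "le (fst a) k" "le (fst b) k"
        using I(4)[OF fst_K[OF ab(1)] fst_K[OF ab(2)]] by blast
      then show ?thesis using lift unfolding leK_def by force
    qed
  qed
  moreover have "fst ` K \<subseteq> I" using fst_K by blast
  moreover have "\<exists>k0\<in>K. \<forall>k\<in>K. leK k0 k \<longrightarrow> le i0 (fst k)" if "i0 \<in> I" for i0
    using lift[OF that] unfolding leK_def by (intro bexI[of _ "(i0, undefined)"]) simp_all
  ultimately have "subnet_map K leK fst I le" unfolding subnet_map_def by blast
  moreover have "net_lim K leK (\<lambda>k. x (fst k)) l"
    unfolding net_lim_def
  proof (intro allI impI)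
    fix U assume "open U \<and> l \<in> U"
    then obtain i0 where "i0 \<in> I" "\<forall>i\<in>I. le i0 i \<longrightarrow> x i \<in> U"
      using lim unfolding net_lim_def by blast
    then show "\<exists>k0\<in>K. \<forall>k\<in>K. leK k0 k \<longrightarrow> x (fst k) \<in> U"
      using lift unfolding leK_def by (intro bexI[of _ "(i0, undefined)"]) (auto dest: fst_K)
  qed
  ultimately show ?thesis by blast
qed

theorem lemma4p1:
  fixes v :: "'a::banach"
    and I :: "'i set" and le :: "'i \<Rightarrow> 'i \<Rightarrow> bool"
    and t :: "'i \<Rightarrow> real" and w :: "'i \<Rightarrow> 'a" and z :: "'i \<Rightarrow> ('a \<Rightarrow>\<^sub>L real)"
  assumes "strictly_convex_space TYPE('a \<Rightarrow>\<^sub>L real)"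
    and "strictly_convex_space TYPE(('a \<Rightarrow>\<^sub>L real) \<Rightarrow>\<^sub>L real)"
    and "w_Kadec_Klee TYPE('a)"
    and "wstar_Kadec_Klee TYPE('a)"
    and "v \<noteq> 0"
    and "directed I le"
    and "\<forall>i\<in>I. t i > 0"
    and "net_lim I le t 0"
    and "\<forall>i\<in>I. z i \<in> J_eps (t i) (w i)"
    and "net_lim I le (\<lambda>i. norm (z i - duality_map v)) 0"
  shows "\<exists>(K :: ('i \<times> 'a set) set) leK \<phi>. subnet_map K leK \<phi> I le \<and> net_lim K leK (\<lambda>k. w (\<phi> k)) v"
proof -
  let ?F = "tail_filter I le"
  note net_lim = net_lim_iff_tendsto_tail_filter[OF assms(6)]
  have d: "duality_map v \<in> J_eps 0 v" by (rule duality_map_in_J_eps[OF assms(1,5)])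
  have "eventually (\<lambda>i. z i \<in> J_eps (t i) (w i)) ?F"
    using assms(6,9) unfolding eventually_tail_filter[OF assms(6)] directed_def by blast
  note lims = tendsto_norm_pairing_of_J_eps[OF d assms(5) this
      assms(8)[unfolded net_lim] assms(10)[unfolded net_lim]]
  have "(w \<longlongrightarrow> v) ?F"
    using w_Kadec_Klee_tendsto[OF assms(3) weak_tendsto_of_duality_pairing[OF assms(2,5) d lims] lims(1)] .
  then show ?thesis using net_lim_subnet_self[OF assms(6)] net_lim by blast
qed

end
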